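(* Let $M\in\mathbb{T}^{n\times n}$ and $q\in\mathbb{T}^n$ be such that no column of $M$ is the all-$(-\infty)$ vector and no entry of $q$ equals $-\infty$, and let $G=(V,E)$ be the associated colored bipartite multigraph. If $F\subset E$ is a perfect matching of $G$ containing at least one red edge, then $\alpha(F)$ is a solution of the TNECP instance $(M,q)$. Moreover, if the instance is nondegenerate, every solution of the TNECP instance is of the form $\alpha(F)$ for such a perfect matching $F$.
   Context: $\mathbb{T}=\mathbb{R}\cup\{-\infty\}$, $\oplus=\max$, $\odot=+$; convention $a-(-\infty)=+\infty$. TNECP instance $(M,q)$: find $(w,z)\in\mathbb{T}^n\times\mathbb{T}^n$ with $w\oplus M\odot z=q$, $\max_i(w_i+z_i)=-\infty$, and $z$ not the all-$(-\infty)$ vector. It is nondegenerate if for each $j$ the minimum $\min_k(q_k-M_{kj})$ is attained by exactly one $k$. The graph $G$ has row nodes $u_1,\dots,u_n$, column nodes $v_1,\dots,v_n$, a blue edge $u_iv_i$ for every $i$, and a red edge $u_iv_j$ whenever $q_i-M_{ij}=\min_k(q_k-M_{kj})$. For $F\subset E$, $\alpha(F)=(w,z)$ with $w_i=q_i$ if the blue edge $u_iv_i\in F$ and $-\infty$ otherwise, and $z_j=q_i-M_{ij}$ if a red edge $u_iv_j\in F$ and $-\infty$ otherwise. *)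

theory Defs
  imports "HOL-Library.Extended_Real"
begin

text \<open>Tropical semiring T = R \<union> {-\<infinity>} is modelled inside ereal: an element x is
  tropical iff x \<noteq> \<infinity>. max is tropical addition, + is tropical multiplication.
  Indices range over a finite type 'n (so n = CARD('n)).
  In ereal, a - (-\<infinity>) = \<infinity> for finite a, matching the paper's convention.\<close>

definition trop :: "ereal \<Rightarrow> bool" where
  "trop x \<longleftrightarrow> x \<noteq> \<infinity>"

definition colmin :: "('n::finite \<Rightarrow> 'n \<Rightarrow> ereal) \<Rightarrow> ('n \<Rightarrow> ereal) \<Rightarrow> 'n \<Rightarrow> ereal" where
  "colmin M q j = Min (range (\<lambda>k. q k - M k j))"

definition tnecp_solution ::
  "('n::finite \<Rightarrow> 'n \<Rightarrow> ereal) \<Rightarrow> ('n \<Rightarrow> ereal) \<Rightarrow> ('n \<Rightarrow> ereal) \<times> ('n \<Rightarrow> ereal) \<Rightarrow> bool" where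
  "tnecp_solution M q wz \<longleftrightarrow>
     (let w = fst wz; z = snd wz in
       (\<forall>i. trop (w i)) \<and> (\<forall>j. trop (z j)) \<and>
       (\<forall>i. max (w i) (Max (range (\<lambda>j. M i j + z j))) = q i) \<and>
       Max (range (\<lambda>i. w i + z i)) = -\<infinity> \<and>
       (\<exists>j. z j \<noteq> -\<infinity>))"

definition nondegenerate :: "('n::finite \<Rightarrow> 'n \<Rightarrow> ereal) \<Rightarrow> ('n \<Rightarrow> ereal) \<Rightarrow> bool" where
  "nondegenerate M q \<longleftrightarrow> (\<forall>j. \<exists>!k. q k - M k j = colmin M q j)"

text \<open>Edges of the colored bipartite multigraph: Blue i is u_i v_i, Red i j is u_i v_j.\<close>
datatype 'n edge = Blue 'n | Red 'n 'n

fun row_of :: "'n edge \<Rightarrow> 'n" where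
  "row_of (Blue i) = i" | "row_of (Red i j) = i"

fun col_of :: "'n edge \<Rightarrow> 'n" where
  "col_of (Blue i) = i" | "col_of (Red i j) = j"

fun is_red :: "'n edge \<Rightarrow> bool" where
  "is_red (Blue i) = False" | "is_red (Red i j) = True"

definition edges :: "('n::finite \<Rightarrow> 'n \<Rightarrow> ereal) \<Rightarrow> ('n \<Rightarrow> ereal) \<Rightarrow> 'n edge set" where
  "edges M q = range Blue \<union> {Red i j | i j. q i - M i j = colmin M q j}"

definition perfect_matching ::
  "('n::finite \<Rightarrow> 'n \<Rightarrow> ereal) \<Rightarrow> ('n \<Rightarrow> ereal) \<Rightarrow> 'n edge set \<Rightarrow> bool" where
  "perfect_matching M q F \<longleftrightarrow> F \<subseteq> edges M q \<and>
     (\<forall>i. \<exists>!e. e \<in> F \<and> row_of e = i) \<and>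
     (\<forall>j. \<exists>!e. e \<in> F \<and> col_of e = j)"

definition alpha ::
  "('n::finite \<Rightarrow> 'n \<Rightarrow> ereal) \<Rightarrow> ('n \<Rightarrow> ereal) \<Rightarrow> 'n edge set \<Rightarrow> ('n \<Rightarrow> ereal) \<times> ('n \<Rightarrow> ereal)" where
  "alpha M q F =
     ((\<lambda>i. if Blue i \<in> F then q i else -\<infinity>),
      (\<lambda>j. if \<exists>i. Red i j \<in> F then (let i = (SOME i. Red i j \<in> F) in q i - M i j) else -\<infinity>))"

end

theory Submission
  imports Defs
begin

(* Write alpha(F) = (w, z). For a perfect matching F each z_j is either -\<infinity> or the column
   minimum min_k (q_k - M_kj), so M_ij + z_j \<le> q_i throughout; the equation of row i is attained
   by w_i = q_i if i is matched by its blue edge and by M_ij + z_j = q_i if it is matched by a red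
   edge u_i v_j, and complementarity holds because column i carries only one edge.

   Conversely, in a solution z_j never exceeds the column minimum, so a row i with w_i \<noteq> q_i is
   attained at a column j where z_j equals the column minimum and i is a minimising row, by
   nondegeneracy the unique one. Thus the rows {i. w_i = q_i} together with the minimising rows of
   the columns {j. z_j = colmin j} cover all n rows. The two index sets are disjoint by
   complementarity, so counting shows that they partition the indices and that the induced
   column-to-row assignment is a bijection, i.e. a perfect matching F with alpha(F) = (w, z). *)

(* Unlike ereal_le_minus, b = -\<infinity> is allowed here: then a - b = \<infinity> and both sides hold. *)
lemma ereal_add_le_iff_le_diff:
  fixes a b c :: ereal
  assumes "\<bar>a\<bar> \<noteq> \<infinity>" "b \<noteq> \<infinity>" "c \<noteq> \<infinity>"
  shows "b + c \<le> a \<longleftrightarrow> c \<le> a - b"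
  using assms by (cases a; cases b; cases c) auto

lemma ereal_add_eq_iff_eq_diff:
  fixes a b c :: ereal
  assumes "\<bar>a\<bar> \<noteq> \<infinity>" "b \<noteq> \<infinity>" "c \<noteq> \<infinity>"
  shows "b + c = a \<longleftrightarrow> c = a - b"
  using assms by (cases a; cases b; cases c) auto

lemma max_Max_range_eq_iff:
  fixes f :: "'n::finite \<Rightarrow> 'a::linorder"
  shows "max a (Max (range f)) = b \<longleftrightarrow> a \<le> b \<and> (\<forall>j. f j \<le> b) \<and> (a = b \<or> (\<exists>j. f j = b))"
    (is "max a ?m = b \<longleftrightarrow> _")
proof -
  have "?m \<in> range f" by (rule Max_in) auto
  then obtain j0 where j0: "?m = f j0" by blast
  have f_le: "f j \<le> ?m" for j by simp
  show ?thesis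
  proof
    assume max_eq: "max a ?m = b"
    then have "a \<le> b" and "?m \<le> b" by (metis max.cobounded1, metis max.cobounded2)
    moreover have "a = b \<or> ?m = b" using max_eq by (auto simp: max_def)
    ultimately show "a \<le> b \<and> (\<forall>j. f j \<le> b) \<and> (a = b \<or> (\<exists>j. f j = b))"
      using j0 f_le order_trans by metis
  next
    assume rhs: "a \<le> b \<and> (\<forall>j. f j \<le> b) \<and> (a = b \<or> (\<exists>j. f j = b))"
    then have "?m \<le> b" using j0 by simp
    moreover have "a = b \<or> ?m = b" using rhs f_le calculation by (metis antisym)
    ultimately show "max a ?m = b" using rhs by (metis max.absorb1 max.absorb2)
  qed
qed

lemma tnecp_solution_iff:
  "tnecp_solution M q (w, z) \<longleftrightarrow>
     (\<forall>i. w i \<noteq> \<infinity>) \<and> (\<forall>j. z j \<noteq> \<infinity>) \<and>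
     (\<forall>i. w i \<le> q i \<and> (\<forall>j. M i j + z j \<le> q i) \<and> (w i = q i \<or> (\<exists>j. M i j + z j = q i))) \<and>
     (\<forall>i. w i = -\<infinity> \<or> z i = -\<infinity>) \<and> (\<exists>j. z j \<noteq> -\<infinity>)"
proof -
  have Max_eq_MInf: "Max (range (\<lambda>i. w i + z i)) = -\<infinity> \<longleftrightarrow> (\<forall>i. w i + z i = -\<infinity>)"
    using Max_le_iff[of "range (\<lambda>i. w i + z i)" "-\<infinity>"] by simp
  show ?thesis
    unfolding tnecp_solution_def trop_def Let_def fst_conv snd_conv max_Max_range_eq_iff Max_eq_MInf
    by auto
qed

lemma colmin_le: "colmin M q j \<le> q k - M k j"
  unfolding colmin_def by (rule Min_le) auto

lemma colmin_attained: "\<exists>k. colmin M q j = q k - M k j"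
proof -
  have "colmin M q j \<in> range (\<lambda>k. q k - M k j)"
    unfolding colmin_def by (rule Min_in) auto
  then show ?thesis by auto
qed

definition argmin_row :: "('n::finite \<Rightarrow> 'n \<Rightarrow> ereal) \<Rightarrow> ('n \<Rightarrow> ereal) \<Rightarrow> 'n \<Rightarrow> 'n" where
  "argmin_row M q j = (THE k. q k - M k j = colmin M q j)"

lemma nondegenerate_argmin_row_iff:
  assumes "nondegenerate M q"
  shows "q k - M k j = colmin M q j \<longleftrightarrow> k = argmin_row M q j"
  using assms theI'[of "\<lambda>k. q k - M k j = colmin M q j"]
  unfolding nondegenerate_def argmin_row_def by blast

lemma fst_alpha: "fst (alpha M q F) i = (if Blue i \<in> F then q i else -\<infinity>)"
  by (simp add: alpha_def)

lemma snd_alpha: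
  assumes "F \<subseteq> edges M q"
  shows "snd (alpha M q F) j = (if \<exists>i. Red i j \<in> F then colmin M q j else -\<infinity>)"
proof (cases "\<exists>i. Red i j \<in> F")
  case True
  then have "Red (SOME i. Red i j \<in> F) j \<in> F" by (rule someI_ex)
  with assms True show ?thesis by (auto simp: alpha_def edges_def)
qed (simp add: alpha_def)

lemma perfect_matching_range:
  assumes "range e \<subseteq> edges M q" and "\<And>j. col_of (e j) = j" and "inj (\<lambda>j. row_of (e j))"
  shows "perfect_matching M q (range e)"
  unfolding perfect_matching_def
proof (intro conjI allI)
  fix i
  obtain j where "row_of (e j) = i"
    using finite_UNIV_inj_surj[OF finite_UNIV assms(3)] by (metis surjD)
  with assms(3) show "\<exists>!x. x \<in> range e \<and> row_of x = i"
    by (auto dest: injD)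
next
  fix j
  from assms(2) show "\<exists>!x. x \<in> range e \<and> col_of x = j" by auto
qed (rule assms(1))

lemma perfect_matching_Red:
  "perfect_matching M q F \<Longrightarrow> Red i j \<in> F \<Longrightarrow> q i - M i j = colmin M q j"
  unfolding perfect_matching_def edges_def by auto

lemma perfect_matching_row_cases:
  assumes "perfect_matching M q F"
  shows "Blue i \<in> F \<or> (\<exists>j. Red i j \<in> F)"
proof -
  obtain e where "e \<in> F" "row_of e = i"
    using assms unfolding perfect_matching_def by blast
  then show ?thesis by (cases e) auto
qed

lemma perfect_matching_Blue_Red:
  assumes "perfect_matching M q F" and "Blue j \<in> F"
  shows "Red i j \<notin> F"
proof
  assume "Red i j \<in> F"
  with assms have "Red i j = Blue j"
    unfolding perfect_matching_def by (metis col_of.simps)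
  then show False by simp
qed

lemma endo_image_eq_UNIV:
  fixes f :: "'a::finite \<Rightarrow> 'a"
  assumes "f ` A = UNIV"
  shows "A = UNIV" and "inj f"
proof -
  have "card (UNIV :: 'a set) \<le> card A"
    using surj_card_le[of A UNIV f] assms by simp
  then show "A = UNIV" using card_seteq[of UNIV A] by simp
  with assms show "inj f" using finite_UNIV_surj_inj[OF finite_UNIV, of f] by simp
qed

locale tnecp_instance =
  fixes M :: "'n::finite \<Rightarrow> 'n \<Rightarrow> ereal" and q :: "'n \<Rightarrow> ereal"
  assumes M_not_PInf: "M i j \<noteq> \<infinity>"
    and q_finite: "\<bar>q i\<bar> \<noteq> \<infinity>"
    and column_not_MInf: "\<exists>i. M i j \<noteq> -\<infinity>"
begin

lemma colmin_finite: "\<bar>colmin M q j\<bar> \<noteq> \<infinity>"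
proof -
  obtain i where "M i j \<noteq> -\<infinity>" using column_not_MInf by blast
  then have "colmin M q j \<noteq> \<infinity>"
    using colmin_le[of M q j i] q_finite[of i] M_not_PInf[of i j]
    by (cases "q i"; cases "M i j") auto
  moreover obtain k where "colmin M q j = q k - M k j" using colmin_attained by blast
  then have "colmin M q j \<noteq> -\<infinity>"
    using q_finite[of k] M_not_PInf[of k j] by (cases "q k"; cases "M k j") auto
  ultimately show ?thesis by auto
qed

lemma le_colmin_iff:
  assumes "c \<noteq> \<infinity>"
  shows "c \<le> colmin M q j \<longleftrightarrow> (\<forall>k. M k j + c \<le> q k)"
  unfolding colmin_def using assms q_finite M_not_PInf
  by (simp add: ereal_add_le_iff_le_diff)

lemma M_add_eq_q_iff:
  assumes "c \<noteq> \<infinity>"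
  shows "M i j + c = q i \<longleftrightarrow> c = q i - M i j"
  using ereal_add_eq_iff_eq_diff[of "q i" "M i j" c] assms q_finite M_not_PInf by simp

theorem alpha_solution:
  assumes pm: "perfect_matching M q F" and red: "\<exists>e\<in>F. is_red e"
  shows "tnecp_solution M q (alpha M q F)"
proof -
  have sub: "F \<subseteq> edges M q" using pm unfolding perfect_matching_def by blast
  define w where "w = fst (alpha M q F)"
  define z where "z = snd (alpha M q F)"
  have w: "w i = (if Blue i \<in> F then q i else -\<infinity>)" for i
    unfolding w_def by (rule fst_alpha)
  have z: "z j = (if \<exists>i. Red i j \<in> F then colmin M q j else -\<infinity>)" for j
    unfolding z_def using sub by (rule snd_alpha)
  have w_not_PInf: "w i \<noteq> \<infinity>" for i using w q_finite[of i] by auto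
  have z_not_PInf: "z j \<noteq> \<infinity>" for j using z colmin_finite[of j] by auto
  have "z j \<le> colmin M q j" for j using z by simp
  then have z_bound: "M i j + z j \<le> q i" for i j using le_colmin_iff z_not_PInf by blast
  have row_attained: "w i = q i \<or> (\<exists>j. M i j + z j = q i)" for i
    using perfect_matching_row_cases[OF pm, of i]
  proof (elim disjE exE)
    assume "Blue i \<in> F"
    then show ?thesis using w by simp
  next
    fix j
    assume "Red i j \<in> F"
    then have "z j = q i - M i j" using z perfect_matching_Red[OF pm] by auto
    then show ?thesis using M_add_eq_q_iff z_not_PInf by blast
  qed
  have complementary: "w i = -\<infinity> \<or> z i = -\<infinity>" for i
    using perfect_matching_Blue_Red[OF pm] w z by auto
  obtain e where "e \<in> F" "is_red e" using red by blast
  then obtain i j where "Red i j \<in> F" by (cases e) auto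
  then have "z j \<noteq> -\<infinity>" using z colmin_finite[of j] by auto
  then have "tnecp_solution M q (w, z)"
    unfolding tnecp_solution_iff
    using w_not_PInf z_not_PInf w z_bound row_attained complementary by auto
  moreover have "alpha M q F = (w, z)" by (simp add: w_def z_def)
  ultimately show ?thesis by simp
qed

lemma solution_le_colmin:
  assumes "tnecp_solution M q (w, z)"
  shows "z j \<le> colmin M q j"
  using assms le_colmin_iff unfolding tnecp_solution_iff by blast

lemma nondegenerate_solution_row_tight:
  assumes nd: "nondegenerate M q" and sol: "tnecp_solution M q (w, z)" and "w i \<noteq> q i"
  shows "\<exists>j. z j = colmin M q j \<and> argmin_row M q j = i"
proof -
  obtain j where "M i j + z j = q i" and "z j \<noteq> \<infinity>"
    using sol \<open>w i \<noteq> q i\<close> unfolding tnecp_solution_iff by blast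
  then have "z j = q i - M i j" using M_add_eq_q_iff by blast
  then have "z j = colmin M q j" and "q i - M i j = colmin M q j"
    using solution_le_colmin[OF sol, of j] colmin_le[of M q j i] by auto
  then show ?thesis unfolding nondegenerate_argmin_row_iff[OF nd] by blast
qed

lemma nondegenerate_solution_shape:
  assumes nd: "nondegenerate M q" and sol: "tnecp_solution M q (w, z)"
  defines "A \<equiv> {i. w i = q i}"
  shows "w = (\<lambda>i. if i \<in> A then q i else -\<infinity>)"
    and "z = (\<lambda>j. if j \<in> A then -\<infinity> else colmin M q j)"
    and "inj (\<lambda>j. if j \<in> A then j else argmin_row M q j)"
proof -
  have complementary: "w i = -\<infinity> \<or> z i = -\<infinity>" for i
    using sol unfolding tnecp_solution_iff by blast
  define B where "B = {j. z j = colmin M q j}"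
  have w_finite_on_A: "w i \<noteq> -\<infinity>" if "i \<in> A" for i
    using that q_finite[of i] unfolding A_def by auto
  have z_finite_on_B: "z j \<noteq> -\<infinity>" if "j \<in> B" for j
    using that colmin_finite[of j] unfolding B_def by auto
  have disjoint: "A \<inter> B = {}"
    using complementary w_finite_on_A z_finite_on_B by blast
  define r where "r = (\<lambda>j. if j \<in> A then j else argmin_row M q j)"
  have "i \<in> r ` (A \<union> B)" for i
  proof (cases "i \<in> A")
    case True
    then show ?thesis unfolding r_def by force
  next
    case False
    then obtain j where "j \<in> B" "argmin_row M q j = i"
      using nondegenerate_solution_row_tight[OF nd sol] unfolding A_def B_def by blast
    moreover have "j \<notin> A" using \<open>j \<in> B\<close> disjoint by blast
    ultimately show ?thesis unfolding r_def by force
  qed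
  then have r_onto: "r ` (A \<union> B) = UNIV" by blast
  have AB: "A \<union> B = UNIV" by (rule endo_image_eq_UNIV(1)[OF r_onto])
  show "inj r" by (rule endo_image_eq_UNIV(2)[OF r_onto])
  show "w = (\<lambda>i. if i \<in> A then q i else -\<infinity>)"
  proof
    fix i
    show "w i = (if i \<in> A then q i else -\<infinity>)"
      using AB complementary[of i] z_finite_on_B[of i] unfolding A_def by auto
  qed
  show "z = (\<lambda>j. if j \<in> A then -\<infinity> else colmin M q j)"
  proof
    fix j
    show "z j = (if j \<in> A then -\<infinity> else colmin M q j)"
      using AB complementary[of j] w_finite_on_A[of j] unfolding B_def by auto
  qed
qed

theorem solution_is_alpha:
  assumes nd: "nondegenerate M q" and sol: "tnecp_solution M q (w, z)"
  shows "\<exists>F. perfect_matching M q F \<and> (\<exists>e\<in>F. is_red e) \<and> (w, z) = alpha M q F"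
proof -
  define A where "A = {i. w i = q i}"
  note shape = nondegenerate_solution_shape[OF nd sol, folded A_def]
  define e where "e j = (if j \<in> A then Blue j else Red (argmin_row M q j) j)" for j
  have blue_iff: "Blue i \<in> range e \<longleftrightarrow> i \<in> A" for i
    unfolding e_def by auto
  have red_iff: "(\<exists>i. Red i j \<in> range e) \<longleftrightarrow> j \<notin> A" for j
    unfolding e_def by (auto split: if_splits)
  have edges: "range e \<subseteq> edges M q"
    using nondegenerate_argmin_row_iff[OF nd] unfolding e_def edges_def by auto
  have row_e: "(\<lambda>j. row_of (e j)) = (\<lambda>j. if j \<in> A then j else argmin_row M q j)"
    unfolding e_def by auto
  have pm: "perfect_matching M q (range e)"
  proof (rule perfect_matching_range[OF edges])
    show "col_of (e j) = j" for j by (simp add: e_def)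
    show "inj (\<lambda>j. row_of (e j))" unfolding row_e by (rule shape(3))
  qed
  obtain j where "z j \<noteq> -\<infinity>" using sol unfolding tnecp_solution_iff by blast
  then have red: "is_red (e j)" using shape(2) unfolding e_def by auto
  have "fst (alpha M q (range e)) = w"
    by (rule ext) (simp add: fst_alpha blue_iff shape(1))
  moreover have "snd (alpha M q (range e)) = z"
    by (rule ext) (simp add: snd_alpha[OF edges] red_iff shape(2))
  ultimately have "(w, z) = alpha M q (range e)" by auto
  with pm red show ?thesis by blast
qed

end

theorem lemma3p2:
  fixes M :: "'n::finite \<Rightarrow> 'n \<Rightarrow> ereal" and q :: "'n \<Rightarrow> ereal"
  assumes M_trop: "\<forall>i j. trop (M i j)"
    and q_fin: "\<forall>i. trop (q i) \<and> q i \<noteq> -\<infinity>"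
    and cols: "\<forall>j. \<exists>i. M i j \<noteq> -\<infinity>"
  shows "(\<forall>F. perfect_matching M q F \<and> (\<exists>e\<in>F. is_red e) \<longrightarrow> tnecp_solution M q (alpha M q F))
       \<and> (nondegenerate M q \<longrightarrow>
            (\<forall>w z. tnecp_solution M q (w, z) \<longrightarrow>
               (\<exists>F. perfect_matching M q F \<and> (\<exists>e\<in>F. is_red e) \<and> (w, z) = alpha M q F)))"
proof -
  interpret tnecp_instance M q
    using assms by unfold_locales (auto simp: trop_def)
  show ?thesis using alpha_solution solution_is_alpha by blast
qed

end
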